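(* Let $n\ge2$ and $0<r<1$ (with $r=\alpha/\beta$, $\alpha,\beta>0$, $\alpha^2+\beta^2=1$). Let $\gamma_-^{(n)}$ be the unique root in $(0,1-r^{2/n})$ of $\alpha^2+\beta^2\gamma^n=\alpha\beta(1-\gamma)^{n/2}$, let $\gamma_+^{(n)}=1-r^{2/n}$ and $\gamma_e^{(n)}=r^{2/n}$. Set $r_1^{(n)}=(1+2^{2/n})^{-n/2}$ and $r_2^{(n)}=2^{-n/2}$ (equivalently $\alpha_1^{(n)}=1/\sqrt{1+(1+2^{2/n})^n}$ and $\alpha_2^{(n)}=1/\sqrt{1+2^n}$). Then - if $r<r_1^{(n)}$: $\gamma_e^{(n)}<\gamma_-^{(n)}<\gamma_+^{(n)}$; - if $r_1^{(n)}<r<r_2^{(n)}$: $\gamma_-^{(n)}<\gamma_e^{(n)}<\gamma_+^{(n)}$; - if $r_2^{(n)}<r<1$: $\gamma_-^{(n)}<\gamma_+^{(n)}<\gamma_e^{(n)}$. In particular for $n=2$ the boundaries are $\alpha=1/\sqrt{10}$ and $\alpha=1/\sqrt5$.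
   Context: These are the thresholds of the amplitude-damped state $\rho_n(\gamma)=\mathcal E_\gamma^{\otimes n}(|\psi_n\rangle\langle\psi_n|)$, $|\psi_n\rangle=\alpha|0^n\rangle+\beta|1^n\rangle$, where $\mathcal E_\gamma$ is single-qubit amplitude damping (Kraus operators $|0\rangle\langle0|+\sqrt{1-\gamma}|1\rangle\langle1|$ and $\sqrt\gamma|0\rangle\langle1|$): $\gamma_\mp^{(n)}$ are where the trajectory enters/exits the stabilizer polytope, and $\gamma_e^{(n)}=r^{2/n}$ is where the bipartite negativity vanishes. *)

theory Defs
  imports Complex_Main
begin

text \<open>Threshold where the trajectory exits the stabilizer polytope.\<close>
definition gamma_plus :: "nat \<Rightarrow> real \<Rightarrow> real" where
  "gamma_plus n r = 1 - r powr (2 / real n)"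

text \<open>Threshold where the bipartite negativity vanishes.\<close>
definition gamma_e :: "nat \<Rightarrow> real \<Rightarrow> real" where
  "gamma_e n r = r powr (2 / real n)"

definition gamma_minus_eq :: "nat \<Rightarrow> real \<Rightarrow> real \<Rightarrow> real \<Rightarrow> bool" where
  "gamma_minus_eq n \<alpha> \<beta> g \<longleftrightarrow>
     \<alpha>^2 + \<beta>^2 * g^n = \<alpha> * \<beta> * (1 - g) powr (real n / 2)"

definition r1 :: "nat \<Rightarrow> real" where
  "r1 n = (1 + 2 powr (2 / real n)) powr (- real n / 2)"

definition r2 :: "nat \<Rightarrow> real" where
  "r2 n = 2 powr (- real n / 2)"

definition alpha1 :: "nat \<Rightarrow> real" where
  "alpha1 n = 1 / sqrt (1 + (1 + 2 powr (2 / real n)) ^ n)"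

definition alpha2 :: "nat \<Rightarrow> real" where
  "alpha2 n = 1 / sqrt (1 + 2 ^ n)"

end

theory Submission
  imports Defs
begin

text \<open>Dividing the defining equation of gamma_minus by beta^2 turns it into F(gamma) = 0 for the
  strictly increasing function F(x) = r^2 + x^n - r (1 - x)^(n/2) on [0, 1]. Hence gamma_minus lies
  above or below s = gamma_e = r^(2/n) according to the sign of F(s) = r (2 r - (1 - s)^(n/2)).
  Since 2 r = (2^(2/n) s)^(n/2), this is the sign of (1 + 2^(2/n)) s - 1, which changes exactly
  at r = r1. Likewise gamma_e < gamma_plus = 1 - s iff s < 1/2 iff r < r2. The thresholds in alpha
  follow because alpha = 1 / sqrt (1 + 1/r^2) is an increasing function of r.\<close>

lemma powr_less_base_iff:
  fixes a x y :: real
  assumes "0 < a" "0 \<le> x" "0 \<le> y"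
  shows "x powr a < y powr a \<longleftrightarrow> x < y"
  using assms by (metis not_le powr_less_mono2 powr_mono2 less_imp_le)

definition gamma_minus_residual :: "nat \<Rightarrow> real \<Rightarrow> real \<Rightarrow> real" where
  "gamma_minus_residual n r x = r^2 + x^n - r * (1 - x) powr (real n / 2)"

lemma gamma_minus_eq_iff_residual:
  assumes "\<beta> > 0"
  shows "gamma_minus_eq n \<alpha> \<beta> g \<longleftrightarrow> gamma_minus_residual n (\<alpha> / \<beta>) g = 0"
proof -
  have "\<alpha>^2 + \<beta>^2 * g^n - \<alpha> * \<beta> * (1 - g) powr (real n / 2)
        = \<beta>^2 * gamma_minus_residual n (\<alpha> / \<beta>) g"
    using assms by (simp add: gamma_minus_residual_def field_simps power2_eq_square)
  moreover have "\<beta>^2 \<noteq> 0" using assms by simp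
  ultimately show ?thesis
    unfolding gamma_minus_eq_def by (metis mult_eq_0_iff right_minus_eq)
qed

lemma gamma_minus_residual_strict_mono:
  assumes "0 < n" "0 < r"
  shows "strict_mono_on {0..1} (gamma_minus_residual n r)"
proof (rule strict_mono_onI)
  fix x y :: real
  assume "x \<in> {0..1}" "y \<in> {0..1}" "x < y"
  then have "x^n < y^n"
    using assms(1) by (simp add: power_strict_mono)
  moreover have "r * (1 - y) powr (real n / 2) \<le> r * (1 - x) powr (real n / 2)"
    using assms(2) \<open>y \<in> {0..1}\<close> \<open>x < y\<close> by (simp add: powr_mono2)
  ultimately show "gamma_minus_residual n r x < gamma_minus_residual n r y"
    unfolding gamma_minus_residual_def by linarith
qed

lemma gamma_e_pos: "0 < r \<Longrightarrow> 0 < gamma_e n r"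
  by (simp add: gamma_e_def)

lemma gamma_e_less_one: "0 < n \<Longrightarrow> 0 < r \<Longrightarrow> r < 1 \<Longrightarrow> gamma_e n r < 1"
  unfolding gamma_e_def by (metis divide_pos_pos of_nat_0_less_iff powr01_less_one zero_less_numeral)

lemma gamma_e_powr_half:
  assumes "0 < n" "0 < r"
  shows "gamma_e n r powr (real n / 2) = r"
  using assms by (simp add: gamma_e_def powr_powr)

lemma gamma_e_power:
  assumes "0 < n" "0 < r"
  shows "gamma_e n r ^ n = r^2"
  using assms by (simp add: gamma_e_def powr_power)

lemma gamma_minus_residual_gamma_e:
  assumes "0 < n" "0 < r"
  shows "gamma_minus_residual n r (gamma_e n r)
           = r * (2 * r - (1 - gamma_e n r) powr (real n / 2))"
  using gamma_e_power[OF assms]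
  by (simp add: gamma_minus_residual_def algebra_simps power2_eq_square)

lemma two_mult_less_powr_iff:
  assumes "0 < n" "0 < r" "r < 1"
  shows "2 * r < (1 - gamma_e n r) powr (real n / 2)
           \<longleftrightarrow> 2 powr (2 / real n) * gamma_e n r < 1 - gamma_e n r"
    and "(1 - gamma_e n r) powr (real n / 2) < 2 * r
           \<longleftrightarrow> 1 - gamma_e n r < 2 powr (2 / real n) * gamma_e n r"
proof -
  have "2 * r = (2 powr (2 / real n) * gamma_e n r) powr (real n / 2)"
    using assms by (simp add: powr_mult powr_powr gamma_e_powr_half)
  moreover have "0 \<le> 2 powr (2 / real n) * gamma_e n r" "0 \<le> 1 - gamma_e n r"
    using assms gamma_e_pos[of r n] gamma_e_less_one[of n r] by auto
  moreover have "0 < real n / 2"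
    using assms by simp
  ultimately show "2 * r < (1 - gamma_e n r) powr (real n / 2)
           \<longleftrightarrow> 2 powr (2 / real n) * gamma_e n r < 1 - gamma_e n r"
    and "(1 - gamma_e n r) powr (real n / 2) < 2 * r
           \<longleftrightarrow> 1 - gamma_e n r < 2 powr (2 / real n) * gamma_e n r"
    by (simp_all add: powr_less_base_iff)
qed

lemma gamma_e_compare_gamma_minus:
  assumes "0 < n" "0 < r" "r < 1"
    and "0 \<le> g" "g \<le> 1" "gamma_minus_residual n r g = 0"
  shows "gamma_e n r < g \<longleftrightarrow> gamma_e n r * (1 + 2 powr (2 / real n)) < 1"
    and "g < gamma_e n r \<longleftrightarrow> 1 < gamma_e n r * (1 + 2 powr (2 / real n))"
proof -
  let ?F = "gamma_minus_residual n r" and ?s = "gamma_e n r"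
  have s01: "?s \<in> {0..1}" and g01: "g \<in> {0..1}"
    using assms gamma_e_pos[of r n] gamma_e_less_one[of n r] by auto
  note mono = strict_mono_on_less[OF gamma_minus_residual_strict_mono[OF assms(1,2)]]
  have "?s < g \<longleftrightarrow> ?F ?s < 0"
    using mono[OF s01 g01] assms(6) by simp
  also have "\<dots> \<longleftrightarrow> 2 * r < (1 - ?s) powr (real n / 2)"
    using assms(1,2) by (simp add: gamma_minus_residual_gamma_e mult_less_0_iff)
  finally show "?s < g \<longleftrightarrow> ?s * (1 + 2 powr (2 / real n)) < 1"
    using two_mult_less_powr_iff(1)[OF assms(1-3)] by (simp add: algebra_simps)
  have "g < ?s \<longleftrightarrow> 0 < ?F ?s"
    using mono[OF g01 s01] assms(6) by simp
  also have "\<dots> \<longleftrightarrow> (1 - ?s) powr (real n / 2) < 2 * r"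
    using assms(1,2) by (simp add: gamma_minus_residual_gamma_e zero_less_mult_iff)
  finally show "g < ?s \<longleftrightarrow> 1 < ?s * (1 + 2 powr (2 / real n))"
    using two_mult_less_powr_iff(2)[OF assms(1-3)] by (simp add: algebra_simps)
qed

lemma less_powr_neg_half_iff:
  assumes "0 < n" "0 < r" "0 < t"
  shows "r < t powr (- real n / 2) \<longleftrightarrow> gamma_e n r * t < 1"
    and "t powr (- real n / 2) < r \<longleftrightarrow> 1 < gamma_e n r * t"
proof -
  have pos: "0 < 2 / real n"
    using assms(1) by simp
  have "(t powr (- real n / 2)) powr (2 / real n) = t powr (- real n / 2 * (2 / real n))"
    by (rule powr_powr)
  also have "\<dots> = 1 / t"
    using assms by (simp add: powr_minus_divide)
  finally have "(t powr (- real n / 2)) powr (2 / real n) = 1 / t" .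
  then have "r < t powr (- real n / 2) \<longleftrightarrow> gamma_e n r < 1 / t"
       and "t powr (- real n / 2) < r \<longleftrightarrow> 1 / t < gamma_e n r"
    using powr_less_base_iff[OF pos, of r "t powr (- real n / 2)"]
      powr_less_base_iff[OF pos, of "t powr (- real n / 2)" r] assms(2)
    by (simp_all add: gamma_e_def)
  then show "r < t powr (- real n / 2) \<longleftrightarrow> gamma_e n r * t < 1"
    and "t powr (- real n / 2) < r \<longleftrightarrow> 1 < gamma_e n r * t"
    using assms(3) by (simp_all add: field_simps)
qed

lemma r1_pos: "0 < r1 n"
proof -
  have "0 < 1 + 2 powr (2 / real n)"
    by (simp add: add_pos_nonneg)
  then show ?thesis
    by (simp add: r1_def)
qed

lemma r2_pos: "0 < r2 n"
  by (simp add: r2_def)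

lemma less_r1_iff:
  assumes "0 < n" "0 < r"
  shows "r < r1 n \<longleftrightarrow> gamma_e n r * (1 + 2 powr (2 / real n)) < 1"
    and "r1 n < r \<longleftrightarrow> 1 < gamma_e n r * (1 + 2 powr (2 / real n))"
proof -
  have "0 < 1 + 2 powr (2 / real n)"
    by (simp add: add_pos_nonneg)
  then show "r < r1 n \<longleftrightarrow> gamma_e n r * (1 + 2 powr (2 / real n)) < 1"
    and "r1 n < r \<longleftrightarrow> 1 < gamma_e n r * (1 + 2 powr (2 / real n))"
    unfolding r1_def using less_powr_neg_half_iff[OF assms] by simp_all
qed

lemma less_r2_iff:
  assumes "0 < n" "0 < r"
  shows "r < r2 n \<longleftrightarrow> gamma_e n r < 1 - gamma_e n r"
    and "r2 n < r \<longleftrightarrow> 1 - gamma_e n r < gamma_e n r"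
  unfolding r2_def using less_powr_neg_half_iff[OF assms zero_less_two]
  by (simp_all add: mult.commute)

lemma gamma_plus_eq: "gamma_plus n r = 1 - gamma_e n r"
  by (simp add: gamma_plus_def gamma_e_def)

definition amplitude_of_ratio :: "real \<Rightarrow> real" where
  "amplitude_of_ratio t = 1 / sqrt (1 + 1 / t^2)"

lemma amplitude_of_ratio_eq:
  assumes "\<alpha> > 0" "\<beta> > 0" "\<alpha>^2 + \<beta>^2 = 1"
  shows "amplitude_of_ratio (\<alpha> / \<beta>) = \<alpha>"
proof -
  have "1 + 1 / (\<alpha> / \<beta>)^2 = 1 / \<alpha>^2"
    using assms by (simp add: field_simps)
  then show ?thesis
    using assms(1) by (simp add: amplitude_of_ratio_def real_sqrt_divide)
qed

lemma amplitude_of_ratio_less_iff: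
  assumes "0 < x" "0 < y"
  shows "amplitude_of_ratio x < amplitude_of_ratio y \<longleftrightarrow> x < y"
proof -
  have "amplitude_of_ratio x < amplitude_of_ratio y \<longleftrightarrow> inverse (y^2) < inverse (x^2)"
    by (simp add: amplitude_of_ratio_def inverse_eq_divide[symmetric] add_pos_nonneg)
  also have "\<dots> \<longleftrightarrow> x^2 < y^2"
    using assms by simp
  also have "\<dots> \<longleftrightarrow> x < y"
    using assms by (metis not_le power_mono_iff less_imp_le zero_less_numeral)
  finally show ?thesis .
qed

lemma ratio_less_iff_amplitude_less:
  assumes "\<alpha> > 0" "\<beta> > 0" "\<alpha>^2 + \<beta>^2 = 1" "0 < t"
  shows "\<alpha> / \<beta> < t \<longleftrightarrow> \<alpha> < amplitude_of_ratio t"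
    and "t < \<alpha> / \<beta> \<longleftrightarrow> amplitude_of_ratio t < \<alpha>"
proof -
  have "0 < \<alpha> / \<beta>"
    using assms by simp
  then show "\<alpha> / \<beta> < t \<longleftrightarrow> \<alpha> < amplitude_of_ratio t"
    and "t < \<alpha> / \<beta> \<longleftrightarrow> amplitude_of_ratio t < \<alpha>"
    using amplitude_of_ratio_less_iff[of "\<alpha> / \<beta>" t] amplitude_of_ratio_less_iff[of t "\<alpha> / \<beta>"]
      amplitude_of_ratio_eq[OF assms(1-3)] assms(4) by simp_all
qed

lemma inverse_sq_powr_neg_half:
  assumes "0 < t"
  shows "1 / (t powr (- real n / 2))^2 = t^n"
proof -
  have "(t powr (- real n / 2))^2 = t powr (- real n)"
    using assms powr_power[of t "- real n / 2" 2] by simp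
  then show ?thesis
    using assms by (simp add: powr_minus_divide powr_realpow)
qed

lemma alpha1_eq_amplitude: "alpha1 n = amplitude_of_ratio (r1 n)"
proof -
  have "0 < 1 + 2 powr (2 / real n)"
    by (simp add: add_pos_nonneg)
  then show ?thesis
    by (simp only: alpha1_def r1_def amplitude_of_ratio_def inverse_sq_powr_neg_half)
qed

lemma alpha2_eq_amplitude: "alpha2 n = amplitude_of_ratio (r2 n)"
  by (simp only: alpha2_def r2_def amplitude_of_ratio_def inverse_sq_powr_neg_half zero_less_numeral)

theorem corollary1:
  fixes n :: nat and \<alpha> \<beta> r g :: real
  assumes n2: "n \<ge> 2"
    and pos: "\<alpha> > 0" "\<beta> > 0"
    and norm: "\<alpha>^2 + \<beta>^2 = 1"
    and rdef: "r = \<alpha> / \<beta>"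
    and r01: "0 < r" "r < 1"
    and groot: "0 < g" "g < 1 - r powr (2 / real n)" "gamma_minus_eq n \<alpha> \<beta> g"
  shows "(r < r1 n \<longrightarrow> gamma_e n r < g \<and> g < gamma_plus n r)
       \<and> (r1 n < r \<and> r < r2 n \<longrightarrow> g < gamma_e n r \<and> gamma_e n r < gamma_plus n r)
       \<and> (r2 n < r \<and> r < 1 \<longrightarrow> g < gamma_plus n r \<and> gamma_plus n r < gamma_e n r)
       \<and> (r < r1 n \<longleftrightarrow> \<alpha> < alpha1 n) \<and> (r1 n < r \<longleftrightarrow> alpha1 n < \<alpha>)
       \<and> (r < r2 n \<longleftrightarrow> \<alpha> < alpha2 n) \<and> (r2 n < r \<longleftrightarrow> alpha2 n < \<alpha>)
       \<and> (n = 2 \<longrightarrow> alpha1 n = 1 / sqrt 10 \<and> alpha2 n = 1 / sqrt 5)"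
proof -
  have n0: "0 < n"
    using n2 by simp
  have g_below_plus: "g < gamma_plus n r"
    using groot(2) by (simp add: gamma_plus_def)
  then have g_le_1: "g \<le> 1"
    using gamma_e_pos[OF r01(1), of n] by (simp add: gamma_plus_eq)
  have root: "gamma_minus_residual n r g = 0"
    using groot(3) pos(2) rdef by (simp add: gamma_minus_eq_iff_residual)
  note gamma_minus_vs_e =
    gamma_e_compare_gamma_minus[OF n0 r01 less_imp_le[OF groot(1)] g_le_1 root]
  note alpha1_iff =
    ratio_less_iff_amplitude_less[OF pos norm r1_pos, folded rdef alpha1_eq_amplitude]
  note alpha2_iff =
    ratio_less_iff_amplitude_less[OF pos norm r2_pos, folded rdef alpha2_eq_amplitude]
  have "n = 2 \<longrightarrow> alpha1 n = 1 / sqrt 10 \<and> alpha2 n = 1 / sqrt 5"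
    by (simp add: alpha1_def alpha2_def)
  then show ?thesis
    using gamma_minus_vs_e g_below_plus less_r1_iff[OF n0 r01(1)] less_r2_iff[OF n0 r01(1)]
      alpha1_iff alpha2_iff
    by (auto simp: gamma_plus_eq)
qed

end
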